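(* Let $U,V\in\mathbb{R}^{3\times3}$ be symmetric positive definite with $U\neq V$, $UV=VU$, and $V=RUR^T$ for some $R\in SO(3)$. Suppose the eigenvalues of $U$ satisfy $0<\lambda_1<\lambda_2=1<\lambda_3$, that $U$ and $V$ have a common eigenvector for the eigenvalue $1$, and that $$\lambda_3=\sqrt{2-\lambda_1^2}.$$ Then there exist rotations $R_u^{+},R_v^{+},R_u^{-},R_v^{-}\in SO(3)$, vectors $b_u^{\pm},b_v^{\pm}\in\mathbb{R}^3$ and unit vectors $\hat m^{+},\hat m^{-}$ with $\hat m^{+}\nparallel\hat m^{-}$ such that, for each sign, $$R_u^{\pm}U-I=b_u^{\pm}\otimes\hat m^{\pm},\qquad R_v^{\pm}V-I=b_v^{\pm}\otimes\hat m^{\pm},$$ and hence $R_u^{\pm}U-R_v^{\pm}V=(b_u^{\pm}-b_v^{\pm})\otimes\hat m^{\pm}$. That is, $U$, $V$ and the identity form two distinct planar triple clusters in which the three pairwise differences are rank-one with a common normal.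
   Context: Here $I$ is the identity matrix (representing austenite) and $SO(3)$ the rotation group. *)

theory Defs
  imports "HOL-Analysis.Analysis"
begin

definition rotation3 :: "real^3^3 \<Rightarrow> bool" where
  "rotation3 R \<longleftrightarrow> orthogonal_matrix R \<and> det R = 1"

definition spd :: "real^3^3 \<Rightarrow> bool" where
  "spd A \<longleftrightarrow> transpose A = A \<and> (\<forall>x. x \<noteq> 0 \<longrightarrow> x \<bullet> (A *v x) > 0)"

definition eigenvalues3 :: "real^3^3 \<Rightarrow> real set" where
  "eigenvalues3 A = {l. \<exists>v. v \<noteq> 0 \<and> A *v v = l *\<^sub>R v}"

definition outer :: "real^3 \<Rightarrow> real^3 \<Rightarrow> real^3^3" where
  "outer a b = (\<chi> i j. a $ i * b $ j)"

end

theory Submission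
  imports Defs
begin

text \<open>In an orthonormal eigenframe of \<open>U\<close> we have \<open>U = diag(l1, 1, l3)\<close>. Since \<open>V\<close> commutes
with \<open>U\<close>, whose eigenvalues are simple, \<open>V\<close> is diagonal in the same frame; it fixes the common
eigenvector and has the spectrum of \<open>U\<close>, so \<open>V \<noteq> U\<close> forces \<open>V = diag(l3, 1, l1)\<close>. For these
diagonal matrices the twinning equations are solved by rotations about the middle axis: taking
\<open>cos \<theta> = (l1 + l3) / 2\<close> and \<open>sin \<theta> = \<plusminus>(l3 - l1) / 2\<close>, which is possible precisely because
\<open>l1\<^sup>2 + l3\<^sup>2 = 2\<close>, the first and third columns of \<open>Q U - I\<close> become equal (resp. opposite), so
\<open>Q U - I\<close> has rank one with normal \<open>(1, 0, \<plusminus>1) / \<surd>2\<close>. The two normals are orthogonal, hence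
not parallel.\<close>

lemma matrix_add_rdistrib:
  fixes A B :: "'a::semiring_1^'n^'m"
  shows "(A + B) ** C = A ** C + B ** C"
  by (simp add: vec_eq_iff matrix_matrix_mult_def sum.distrib distrib_right)

lemma orthogonal_matrix_inner:
  fixes P :: "real^'n^'n"
  assumes "orthogonal_matrix P"
  shows "(P *v x) \<bullet> (P *v y) = x \<bullet> y"
  by (metis assms dot_lmul_matrix matrix_vector_mul_assoc matrix_vector_mul_lid
      orthogonal_matrix_def transpose_matrix_vector)

lemma orthogonal_matrix_norm:
  fixes P :: "real^'n^'n"
  assumes "orthogonal_matrix P"
  shows "norm (P *v x) = norm x"
  by (simp add: norm_eq_sqrt_inner orthogonal_matrix_inner[OF assms])

lemma orthogonal_conj_eq_iff:
  fixes P :: "real^'n^'n"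
  assumes "orthogonal_matrix P"
  shows "A = transpose P ** D ** P \<longleftrightarrow> P ** A ** transpose P = D"
proof -
  have PP: "transpose P ** P = mat 1" "P ** transpose P = mat 1"
    using assms by (simp_all add: orthogonal_matrix_def)
  have "P ** (transpose P ** D ** P) ** transpose P = D"
    by (simp add: matrix_mul_assoc PP) (simp add: matrix_mul_assoc[symmetric] PP)
  moreover have "transpose P ** (P ** A ** transpose P) ** P = A"
    by (simp add: matrix_mul_assoc PP) (simp add: matrix_mul_assoc[symmetric] PP)
  ultimately show ?thesis by auto
qed

lemma orthogonal_conj_mult:
  fixes P :: "real^'n^'n"
  assumes "orthogonal_matrix P"
  shows "(P ** A ** transpose P) ** (P ** B ** transpose P) = P ** (A ** B) ** transpose P"
proof -
  have "transpose P ** P = mat 1"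
    using assms by (simp add: orthogonal_matrix_def)
  then show ?thesis
    by (simp add: matrix_mul_assoc) (simp add: matrix_mul_assoc[symmetric])
qed

lemma rotation3_orthogonal_conj:
  assumes "orthogonal_matrix P" and "rotation3 Q"
  shows "rotation3 (transpose P ** Q ** P)"
proof -
  have "det P * det P = 1"
    using det_orthogonal_matrix[OF assms(1)] by auto
  then show ?thesis
    using assms by (simp add: rotation3_def orthogonal_matrix_mul det_mul)
qed

lemma unit_orthogonal_not_parallel:
  fixes x y :: "'a::real_inner"
  assumes "norm x = 1" and "x \<bullet> y = 0"
  shows "\<not> (\<exists>c. x = c *\<^sub>R y)"
proof
  assume "\<exists>c. x = c *\<^sub>R y"
  then obtain c where "x = c *\<^sub>R y" by blast
  then have "x \<bullet> x = c * (x \<bullet> y)"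
    by (simp add: inner_commute)
  with assms show False
    by (simp add: norm_eq_1)
qed

lemma norm_sgn_orthogonal_image:
  fixes P :: "real^'n^'n"
  assumes "orthogonal_matrix P" and "a \<noteq> 0"
  shows "norm (sgn (P *v a)) = 1"
  using orthogonal_matrix_norm[OF assms(1), of a] assms(2) by (metis norm_eq_zero norm_sgn)

lemma sgn_orthogonal_image_not_parallel:
  fixes P :: "real^'n^'n"
  assumes "orthogonal_matrix P" and "a \<noteq> 0" and "a \<bullet> b = 0"
  shows "\<not> (\<exists>c. sgn (P *v a) = c *\<^sub>R sgn (P *v b))"
proof -
  have "sgn (P *v a) \<bullet> sgn (P *v b) = 0"
    using assms(3) by (simp add: sgn_div_norm orthogonal_matrix_inner[OF assms(1)])
  then show ?thesis
    using unit_orthogonal_not_parallel norm_sgn_orthogonal_image[OF assms(1,2)] by blast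
qed

lemma outer_diff_left: "outer a m - outer b m = outer (a - b) m"
  by (simp add: outer_def vec_eq_iff algebra_simps)

lemma outer_sgn: "outer a m = outer (norm m *\<^sub>R a) (sgn m)"
  by (cases "m = 0") (simp_all add: outer_def vec_eq_iff sgn_div_norm)

lemma transpose_outer_conj:
  "transpose P ** outer a b ** P = outer (transpose P *v a) (transpose P *v b)"
  by (simp add: outer_def vec_eq_iff matrix_matrix_mult_def matrix_vector_mult_def transpose_def
      sum_distrib_left sum_distrib_right mult.commute mult.left_commute del: transpose_matrix_vector)

definition compatible_with_id :: "real^3 \<Rightarrow> real^3^3 \<Rightarrow> bool" where
  "compatible_with_id m U \<longleftrightarrow> (\<exists>Q b. rotation3 Q \<and> Q ** U - mat 1 = outer b m)"

lemma compatible_with_id_orthogonal_conj: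
  assumes "orthogonal_matrix P" and "compatible_with_id m D"
  shows "compatible_with_id (transpose P *v m) (transpose P ** D ** P)"
proof -
  obtain Q b where Q: "rotation3 Q" and QD: "Q ** D - mat 1 = outer b m"
    using assms(2) by (auto simp: compatible_with_id_def)
  have PP: "P ** transpose P = mat 1" "transpose P ** P = mat 1"
    using assms(1) by (simp_all add: orthogonal_matrix_def)
  have "(transpose P ** Q ** P) ** (transpose P ** D ** P) = transpose P ** (Q ** D) ** P"
    by (simp add: matrix_mul_assoc) (simp add: matrix_mul_assoc[symmetric] PP)
  also have "\<dots> = transpose P ** (outer b m + mat 1) ** P"
    using QD by (simp add: algebra_simps)
  also have "\<dots> = transpose P ** outer b m ** P + mat 1"
    by (simp add: matrix_add_ldistrib matrix_add_rdistrib PP)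
  finally have "(transpose P ** Q ** P) ** (transpose P ** D ** P) - mat 1
      = outer (transpose P *v b) (transpose P *v m)"
    by (simp add: transpose_outer_conj del: transpose_matrix_vector)
  then show ?thesis
    using rotation3_orthogonal_conj[OF assms(1) Q] by (auto simp: compatible_with_id_def)
qed

lemma compatible_with_id_sgn:
  assumes "compatible_with_id m U"
  shows "compatible_with_id (sgn m) U"
  using assms outer_sgn by (metis compatible_with_id_def)

lemma compatible_with_id_triple:
  assumes "compatible_with_id m U" and "compatible_with_id m V"
  shows "\<exists>Qu Qv bu bv. rotation3 Qu \<and> rotation3 Qv \<and>
    Qu ** U - mat 1 = outer bu m \<and> Qv ** V - mat 1 = outer bv m \<and>
    Qu ** U - Qv ** V = outer (bu - bv) m"
proof -
  obtain Qu bu Qv bv where "rotation3 Qu" "Qu ** U - mat 1 = outer bu m"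
    and "rotation3 Qv" "Qv ** V - mat 1 = outer bv m"
    using assms by (auto simp: compatible_with_id_def)
  moreover have "Qu ** U - Qv ** V = (Qu ** U - mat 1) - (Qv ** V - mat 1)"
    by simp
  ultimately show ?thesis
    by (metis outer_diff_left)
qed

definition diag3 :: "real \<Rightarrow> real \<Rightarrow> real \<Rightarrow> real^3^3" where
  "diag3 a b c = vector [vector [a, 0, 0], vector [0, b, 0], vector [0, 0, c]]"

definition rot_axis2 :: "real \<Rightarrow> real \<Rightarrow> real^3^3" where
  "rot_axis2 c s = vector [vector [c, 0, -s], vector [0, 1, 0], vector [s, 0, c]]"

lemma rotation3_rot_axis2:
  assumes "c\<^sup>2 + s\<^sup>2 = 1"
  shows "rotation3 (rot_axis2 c s)"
proof -
  have "transpose (rot_axis2 c s) ** rot_axis2 c s = mat 1"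
    using assms by (simp add: vec_eq_iff forall_3 matrix_matrix_mult_def sum_3 transpose_def
        mat_def rot_axis2_def power2_eq_square)
  moreover have "det (rot_axis2 c s) = 1"
    using assms by (simp add: det_3 rot_axis2_def power2_eq_square)
  ultimately show ?thesis
    by (simp add: rotation3_def orthogonal_matrix)
qed

lemma compatible_with_id_diag3:
  assumes "l1\<^sup>2 + l3\<^sup>2 = 2"
  shows "compatible_with_id (vector [1, 0, 1]) (diag3 l1 1 l3)"
proof -
  define c where "c = (l1 + l3) / 2"
  define s where "s = (l3 - l1) / 2"
  have cs: "c\<^sup>2 + s\<^sup>2 = 1" "c * l1 - 1 = - s * l3" "c * l3 - 1 = s * l1"
    using assms by (simp_all add: c_def s_def power2_eq_square field_simps)
  have "rot_axis2 c s ** diag3 l1 1 l3 - mat 1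
      = outer (vector [c * l1 - 1, 0, s * l1]) (vector [1, 0, 1])"
    using cs(2,3) by (simp add: vec_eq_iff forall_3 matrix_matrix_mult_def sum_3 mat_def
        rot_axis2_def diag3_def outer_def)
  then show ?thesis
    using rotation3_rot_axis2[OF cs(1)] by (auto simp: compatible_with_id_def)
qed

lemma compatible_with_id_diag3_reflected:
  assumes "l1\<^sup>2 + l3\<^sup>2 = 2"
  shows "compatible_with_id (vector [1, 0, -1]) (diag3 l1 1 l3)"
proof -
  define S where "S = diag3 1 1 (-1)"
  have "orthogonal_matrix S"
    by (simp add: S_def orthogonal_matrix vec_eq_iff forall_3 matrix_matrix_mult_def sum_3
        transpose_def mat_def diag3_def)
  moreover have "transpose S ** diag3 l1 1 l3 ** S = diag3 l1 1 l3"
    by (simp add: S_def vec_eq_iff forall_3 matrix_matrix_mult_def sum_3 transpose_def diag3_def)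
  moreover have "transpose S *v vector [1, 0, 1] = vector [1, 0, -1]"
    by (simp add: S_def vec_eq_iff forall_3 matrix_vector_mult_def sum_3 transpose_def diag3_def
        del: transpose_matrix_vector)
  ultimately show ?thesis
    using compatible_with_id_orthogonal_conj compatible_with_id_diag3[OF assms] by metis
qed

lemma symmetric_eigenvectors_orthogonal:
  fixes A :: "real^'n^'n"
  assumes "transpose A = A" and "A *v x = a *\<^sub>R x" and "A *v y = b *\<^sub>R y" and "a \<noteq> b"
  shows "x \<bullet> y = 0"
proof -
  have "a * (x \<bullet> y) = (A *v x) \<bullet> y"
    using assms(2) by simp
  also have "\<dots> = x \<bullet> (A *v y)"
    by (metis assms(1) dot_lmul_matrix inner_commute transpose_matrix_vector)
  also have "\<dots> = b * (x \<bullet> y)"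
    using assms(3) by simp
  finally show ?thesis
    using assms(4) by simp
qed

lemma matrix_mul_transpose_nth: "(A ** M ** transpose B) $ i $ j = A $ i \<bullet> (M *v B $ j)"
  by (simp add: matrix_matrix_mult_def matrix_vector_mult_def transpose_def inner_vec_def
      sum_distrib_left sum_distrib_right mult.commute mult.left_commute)
      (rule sum.swap)

lemma symmetric3_eigenframe:
  fixes U :: "real^3^3"
  assumes "transpose U = U" and "distinct [a, b, c]"
    and "U *v x = a *\<^sub>R x" "U *v y = b *\<^sub>R y" "U *v z = c *\<^sub>R z"
    and "x \<noteq> 0" "y \<noteq> 0" "z \<noteq> 0"
  obtains P where "orthogonal_matrix P" "U = transpose P ** diag3 a b c ** P"
    "transpose P *v axis 2 1 = sgn y"
proof -
  define P :: "real^3^3" where "P = vector [sgn x, sgn y, sgn z]"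
  have rows: "P $ 1 = sgn x" "P $ 2 = sgn y" "P $ 3 = sgn z"
    by (simp_all add: P_def)
  have eig: "U *v sgn x = a *\<^sub>R sgn x" "U *v sgn y = b *\<^sub>R sgn y" "U *v sgn z = c *\<^sub>R sgn z"
    using assms(3-5) by (simp_all add: sgn_div_norm matrix_vector_mult_scaleR)
  have unit: "sgn x \<bullet> sgn x = 1" "sgn y \<bullet> sgn y = 1" "sgn z \<bullet> sgn z = 1"
    using assms(6-8) by (simp_all add: inner_commute norm_sgn flip: norm_eq_1)
  have orth: "sgn x \<bullet> sgn y = 0" "sgn x \<bullet> sgn z = 0" "sgn y \<bullet> sgn z = 0"
    using assms(2) symmetric_eigenvectors_orthogonal[OF assms(1)] eig by auto
  have P: "orthogonal_matrix P"
    unfolding orthogonal_matrix_orthonormal_rows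
    by (simp add: forall_3 row_def norm_eq_1 orthogonal_def rows unit orth inner_commute)
  moreover have "U = transpose P ** diag3 a b c ** P"
    unfolding orthogonal_conj_eq_iff[OF P]
    by (simp add: vec_eq_iff forall_3 matrix_mul_transpose_nth rows eig unit orth inner_commute
        diag3_def)
  moreover have "transpose P *v axis 2 1 = sgn y"
    by (simp add: vec_eq_iff forall_3 matrix_vector_mult_def transpose_def sum_3 P_def axis_def
        del: transpose_matrix_vector)
  ultimately show thesis
    using that P by blast
qed

lemma diag3_commute_imp_diag3:
  assumes "distinct [a, b, c]" and "diag3 a b c ** W = W ** diag3 a b c"
  shows "W = diag3 (W $ 1 $ 1) (W $ 2 $ 2) (W $ 3 $ 3)"
proof -
  have E: "(diag3 a b c ** W) $ i $ j = (W ** diag3 a b c) $ i $ j" for i j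
    using assms(2) by simp
  have "a * W$1$2 = W$1$2 * b" "a * W$1$3 = W$1$3 * c" "b * W$2$1 = W$2$1 * a"
    "b * W$2$3 = W$2$3 * c" "c * W$3$1 = W$3$1 * a" "c * W$3$2 = W$3$2 * b"
    using E[of 1 2] E[of 1 3] E[of 2 1] E[of 2 3] E[of 3 1] E[of 3 2]
    by (simp_all add: matrix_matrix_mult_def sum_3 diag3_def)
  then show ?thesis
    using assms(1) by (simp add: vec_eq_iff forall_3 diag3_def mult.commute)
qed

lemma eigenvalues3_diag3: "eigenvalues3 (diag3 a b c) = {a, b, c}"
proof (intro equalityI subsetI)
  fix l assume "l \<in> eigenvalues3 (diag3 a b c)"
  then obtain v where v: "v \<noteq> 0" and eig: "diag3 a b c *v v = l *\<^sub>R v"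
    by (auto simp: eigenvalues3_def)
  have "(diag3 a b c *v v) $ i = (l *\<^sub>R v) $ i" for i
    using eig by simp
  from this[of 1] this[of 2] this[of 3]
  have "a * v$1 = l * v$1" "b * v$2 = l * v$2" "c * v$3 = l * v$3"
    by (simp_all add: matrix_vector_mult_def sum_3 diag3_def)
  moreover have "v$1 \<noteq> 0 \<or> v$2 \<noteq> 0 \<or> v$3 \<noteq> 0"
    using v by (simp add: vec_eq_iff forall_3)
  ultimately show "l \<in> {a, b, c}"
    by (metis insert_iff mult_cancel_right)
next
  fix l assume "l \<in> {a, b, c}"
  moreover have "diag3 a b c *v axis 1 1 = a *\<^sub>R axis 1 1" "diag3 a b c *v axis 2 1 = b *\<^sub>R axis 2 1"
    "diag3 a b c *v axis 3 1 = c *\<^sub>R axis 3 1"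
    by (simp_all add: vec_eq_iff forall_3 matrix_vector_mult_def sum_3 diag3_def axis_def)
  ultimately obtain k where "diag3 a b c *v axis k 1 = l *\<^sub>R axis k 1"
    by blast
  then show "l \<in> eigenvalues3 (diag3 a b c)"
    unfolding eigenvalues3_def by (intro CollectI exI[of _ "axis k 1"]) simp
qed

lemma eigenvalues3_orthogonal_conj:
  assumes "orthogonal_matrix P"
  shows "eigenvalues3 (transpose P ** A ** P) = eigenvalues3 A"
proof -
  have PP: "transpose P ** P = mat 1" "P ** transpose P = mat 1"
    using assms by (simp_all add: orthogonal_matrix_def)
  have "(transpose P ** A ** P) *v v = l *\<^sub>R v \<longleftrightarrow> A *v (P *v v) = l *\<^sub>R (P *v v)" for v l
    by (metis (no_types, lifting) PP matrix_vector_mul_assoc matrix_vector_mul_lid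
        matrix_vector_mult_scaleR)
  moreover have "P *v v = 0 \<longleftrightarrow> v = 0" for v
    using orthogonal_matrix_norm[OF assms, of v] by auto
  moreover have "surj ((*v) P)"
    by (metis PP(2) matrix_vector_mul_assoc matrix_vector_mul_lid surj_def)
  ultimately show ?thesis
    unfolding eigenvalues3_def by (metis (no_types, opaque_lifting) surj_def)
qed

lemma commuting_diag3_conj:
  fixes P U V :: "real^3^3"
  assumes "orthogonal_matrix P" and "distinct [a, b, c]"
    and "U = transpose P ** diag3 a b c ** P" and "U ** V = V ** U"
  obtains d1 d2 d3 where "V = transpose P ** diag3 d1 d2 d3 ** P"
proof -
  define W where "W = P ** V ** transpose P"
  have D: "P ** U ** transpose P = diag3 a b c"
    using orthogonal_conj_eq_iff[OF assms(1)] assms(3) by simp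
  have "diag3 a b c ** W = P ** (U ** V) ** transpose P"
    by (simp add: W_def flip: D orthogonal_conj_mult[OF assms(1)])
  also have "\<dots> = W ** diag3 a b c"
    by (simp add: W_def assms(4) flip: D orthogonal_conj_mult[OF assms(1)])
  finally have "W = diag3 (W$1$1) (W$2$2) (W$3$3)"
    using diag3_commute_imp_diag3[OF assms(2)] by blast
  then show thesis
    using that orthogonal_conj_eq_iff[OF assms(1)] W_def by metis
qed

lemma commuting_conjugate_diag3_frame:
  fixes U V R :: "real^3^3"
  assumes "transpose U = U" and "U \<noteq> V" and "U ** V = V ** U"
    and "orthogonal_matrix R" and "V = R ** U ** transpose R"
    and "l1 < 1" and "1 < l3" and "eigenvalues3 U = {l1, 1, l3}"
    and "e \<noteq> 0" and "U *v e = e" and "V *v e = e"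
  obtains P where "orthogonal_matrix P" "U = transpose P ** diag3 l1 1 l3 ** P"
    "V = transpose P ** diag3 l3 1 l1 ** P"
proof -
  obtain u1 u3 where u1: "u1 \<noteq> 0" "U *v u1 = l1 *\<^sub>R u1" and u3: "u3 \<noteq> 0" "U *v u3 = l3 *\<^sub>R u3"
    using assms(8) unfolding eigenvalues3_def by blast
  have distinct: "distinct [l1, 1, l3]"
    using assms(6,7) by auto
  obtain P where P: "orthogonal_matrix P" and U: "U = transpose P ** diag3 l1 1 l3 ** P"
    and Pe: "transpose P *v axis 2 1 = sgn e"
    using symmetric3_eigenframe[OF assms(1) distinct u1(2) _ u3(2) u1(1) assms(9) u3(1)] assms(10)
    by auto
  obtain a d b where V: "V = transpose P ** diag3 a d b ** P"
    using commuting_diag3_conj[OF P distinct U assms(3)] .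
  have D: "P ** V ** transpose P = diag3 a d b"
    using orthogonal_conj_eq_iff[OF P] V by simp
  have "diag3 a d b *v axis 2 1 = P *v (V *v sgn e)"
    by (simp add: Pe del: transpose_matrix_vector flip: D matrix_vector_mul_assoc)
  also have "\<dots> = P *v sgn e"
    using assms(11) by (simp add: sgn_div_norm matrix_vector_mult_scaleR)
  also have "\<dots> = axis 2 1"
    using P by (simp add: matrix_vector_mul_assoc orthogonal_matrix_def flip: Pe
        del: transpose_matrix_vector)
  finally have "d = 1"
    by (simp add: vec_eq_iff forall_3 matrix_vector_mult_def sum_3 diag3_def axis_def)
  have "eigenvalues3 (diag3 a d b) = eigenvalues3 V"
    using eigenvalues3_orthogonal_conj[OF P] V by simp
  also have "\<dots> = eigenvalues3 U"
    using eigenvalues3_orthogonal_conj[of "transpose R" U] assms(4,5) by simp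
  finally have "{a, 1, b} = {l1, 1, l3}"
    using \<open>d = 1\<close> assms(8) by (simp add: eigenvalues3_diag3)
  then have "l1 \<in> {a, 1, b}" "l3 \<in> {a, 1, b}"
    by simp_all
  moreover have "\<not> (a = l1 \<and> b = l3)"
    using \<open>d = 1\<close> U V assms(2) by auto
  ultimately have "a = l3" "b = l1"
    using assms(6,7) by auto
  then show thesis
    using that P U V \<open>d = 1\<close> by blast
qed

theorem mainTheorem4:
  fixes U V R :: "real^3^3" and l1 l3 :: real
  assumes "spd U" and "spd V" and "U \<noteq> V" and "U ** V = V ** U"
    and "rotation3 R" and "V = R ** U ** transpose R"
    and "0 < l1" and "l1 < 1" and "1 < l3"
    and "eigenvalues3 U = {l1, 1, l3}"
    and "\<exists>e. e \<noteq> 0 \<and> U *v e = e \<and> V *v e = e"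
    and "l3 = sqrt (2 - l1^2)"
  shows "\<exists>Rup Rvp Rum Rvm bup bvp bum bvm mp mm.
     rotation3 Rup \<and> rotation3 Rvp \<and> rotation3 Rum \<and> rotation3 Rvm \<and>
     norm (mp :: real^3) = 1 \<and> norm (mm :: real^3) = 1 \<and>
     \<not> (\<exists>c. mp = c *\<^sub>R mm) \<and>
     Rup ** U - mat 1 = outer bup mp \<and> Rvp ** V - mat 1 = outer bvp mp \<and>
     Rup ** U - Rvp ** V = outer (bup - bvp) mp \<and>
     Rum ** U - mat 1 = outer bum mm \<and> Rvm ** V - mat 1 = outer bvm mm \<and>
     Rum ** U - Rvm ** V = outer (bum - bvm) mm"
proof -
  have "l1\<^sup>2 \<le> 1"
    using assms(7,8) by (simp add: power_le_one)
  then have sum_sq: "l1\<^sup>2 + l3\<^sup>2 = 2" "l3\<^sup>2 + l1\<^sup>2 = 2"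
    using assms(12) by simp_all
  obtain e where e: "e \<noteq> 0" "U *v e = e" "V *v e = e"
    using assms(11) by blast
  obtain P where P: "orthogonal_matrix P" and U: "U = transpose P ** diag3 l1 1 l3 ** P"
    and V: "V = transpose P ** diag3 l3 1 l1 ** P"
    using commuting_conjugate_diag3_frame[OF _ assms(3,4) _ assms(6,8,9,10) e] assms(1,5)
    by (auto simp: spd_def rotation3_def)
  define np nm :: "real^3" where "np = transpose P *v vector [1, 0, 1]"
    and "nm = transpose P *v vector [1, 0, -1]"
  have compat: "compatible_with_id (sgn np) U" "compatible_with_id (sgn np) V"
    "compatible_with_id (sgn nm) U" "compatible_with_id (sgn nm) V"
    unfolding np_def nm_def U V
    by (intro compatible_with_id_sgn compatible_with_id_orthogonal_conj P sum_sq
        compatible_with_id_diag3 compatible_with_id_diag3_reflected)+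
  have "vector [1, 0, 1] \<noteq> (0 :: real^3)" "vector [1, 0, -1] \<noteq> (0 :: real^3)"
    "vector [1, 0, 1] \<bullet> (vector [1, 0, -1] :: real^3) = 0"
    by (simp_all add: vec_eq_iff inner_vec_def sum_3) (metis vector_3(1) zero_neq_one)+
  then have unit: "norm (sgn np) = 1" "norm (sgn nm) = 1"
    and "\<not> (\<exists>c. sgn np = c *\<^sub>R sgn nm)"
    using P unfolding np_def nm_def
    by (simp_all add: norm_sgn_orthogonal_image sgn_orthogonal_image_not_parallel
        del: transpose_matrix_vector)
  then show ?thesis
    using compatible_with_id_triple[OF compat(1,2)] compatible_with_id_triple[OF compat(3,4)] unit
    by blast
qed

end
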